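(* Let $r,n,m,k$ be positive integers and $t=2^m$. Suppose there exists an $(r,t;n,m)$-DBAC of size $k$ in which every column of every array, viewed as a cyclic binary sequence of length $r$, has least period $r$ and even Hamming weight. Then there exists an $(r,t;n+1,m)$-DBAC of size $2^m k$.
   Context: Arrays are binary and cyclic (doubly periodic); an $n\times m$ window of an $r\times t$ array $A$ at position $(p,q)$ is the matrix with entries $A_{(p+u)\bmod r,(q+v)\bmod t}$, $0\le u<n$, $0\le v<m$. An $(r,t;n,m)$-DBAC (de Bruijn array code) of size $k$ is a set of $k$ binary $r\times t$ cyclic arrays such that every binary $n\times m$ matrix appears exactly once as a window in one of the arrays. *)

theory Defs
  imports Main
begin

(* A binary r x t array is modelled as a function nat => nat => bool; only
   entries (u,v) with u<r, v<t are relevant.  Binary n x m matrices are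
   likewise functions nat => nat => bool, compared on {0..<n} x {0..<m}. *)

definition window_eq ::
  "nat \<Rightarrow> nat \<Rightarrow> (nat \<Rightarrow> nat \<Rightarrow> bool) \<Rightarrow> nat \<Rightarrow> nat \<Rightarrow> nat \<Rightarrow> nat
     \<Rightarrow> (nat \<Rightarrow> nat \<Rightarrow> bool) \<Rightarrow> bool" where
  "window_eq r t A p q n m M \<longleftrightarrow>
     (\<forall>u<n. \<forall>v<m. A ((p + u) mod r) ((q + v) mod t) = M u v)"

definition is_DBAC ::
  "nat \<Rightarrow> nat \<Rightarrow> nat \<Rightarrow> nat \<Rightarrow> nat \<Rightarrow> (nat \<Rightarrow> nat \<Rightarrow> nat \<Rightarrow> bool) \<Rightarrow> bool" where
  "is_DBAC r t n m k A \<longleftrightarrow>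
     (\<forall>M :: nat \<Rightarrow> nat \<Rightarrow> bool.
        \<exists>!w. (case w of (i, p, q) \<Rightarrow>
                i < k \<and> p < r \<and> q < t \<and> window_eq r t (A i) p q n m M))"

definition cyc_period :: "nat \<Rightarrow> (nat \<Rightarrow> bool) \<Rightarrow> nat \<Rightarrow> bool" where
  "cyc_period r c d \<longleftrightarrow> (\<forall>u<r. c ((u + d) mod r) = c u)"

definition least_period_is :: "nat \<Rightarrow> (nat \<Rightarrow> bool) \<Rightarrow> nat \<Rightarrow> bool" where
  "least_period_is r c d \<longleftrightarrow> 0 < d \<and> cyc_period r c d \<and>
     (\<forall>d'. 0 < d' \<and> d' < d \<longrightarrow> \<not> cyc_period r c d')"

definition hamming_weight :: "nat \<Rightarrow> (nat \<Rightarrow> bool) \<Rightarrow> nat" where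
  "hamming_weight r c = card {u. u < r \<and> c u}"

end

theory Submission
  imports Defs "HOL-Library.FuncSet"
begin

(* Integrate every column of every array A i over GF(2): the prefix parities S i of a column
   form a cyclic sequence of length r because the column has even weight, and their vertical
   difference is A i.  The new arrays are S i XOR Y a, where Y a runs over the 2^m binary
   sequences annihilated by (1 + E)^m, E the shift.  These sequences are 2^m-periodic and, at
   every position, every binary word of length m occurs in exactly one of them.  An (n+1) x m
   window of S i XOR Y a is determined by its vertical difference, an n x m window of A i
   (which fixes i and the position), together with its first row (which then fixes a). *)

definition bdiff :: "(nat \<Rightarrow> bool) \<Rightarrow> nat \<Rightarrow> bool" where
  "bdiff y j \<longleftrightarrow> y (Suc j) \<noteq> y j"

definition bdiff_null :: "nat \<Rightarrow> (nat \<Rightarrow> bool) \<Rightarrow> bool" where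
  "bdiff_null m y \<longleftrightarrow> (bdiff ^^ m) y = (\<lambda>_. False)"

definition prefix_parity :: "(nat \<Rightarrow> bool) \<Rightarrow> nat \<Rightarrow> bool" where
  "prefix_parity d u \<longleftrightarrow> odd (card {v. v < u \<and> d v})"

lemma prefix_parity_0 [simp]: "\<not> prefix_parity d 0"
  by (simp add: prefix_parity_def)

lemma prefix_parity_Suc: "prefix_parity d (Suc u) \<longleftrightarrow> prefix_parity d u \<noteq> d u"
proof -
  have "{v. v < Suc u \<and> d v} = (if d u then insert u {v. v < u \<and> d v} else {v. v < u \<and> d v})"
    by (auto simp: less_Suc_eq)
  then show ?thesis
    by (simp add: prefix_parity_def)
qed

lemma bdiff_eq_imp_eq:
  assumes "bdiff y = bdiff z" "y q = z q"
  shows "y = z"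
proof -
  have "y j = z j \<longleftrightarrow> y 0 = z 0" for j
  proof (induction j)
    case (Suc j)
    have "bdiff y j = bdiff z j" using assms(1) by simp
    then show ?case using Suc by (auto simp: bdiff_def)
  qed simp
  then show ?thesis using assms(2) by blast
qed

lemma bdiff_null_Suc: "bdiff_null (Suc m) y \<longleftrightarrow> bdiff_null m (bdiff y)"
  by (simp only: bdiff_null_def funpow_Suc_right comp_def)

lemma bdiff_null_eq:
  assumes "bdiff_null m y" "bdiff_null m z" "\<forall>v<m. y (q + v) = z (q + v)"
  shows "y = z"
  using assms
proof (induction m arbitrary: y z)
  case 0
  then show ?case by (simp add: bdiff_null_def)
next
  case (Suc m)
  have "\<forall>v<m. bdiff y (q + v) = bdiff z (q + v)"
    using Suc.prems(3) by (auto simp: bdiff_def)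
  then have "bdiff y = bdiff z"
    using Suc.IH Suc.prems(1,2) by (simp add: bdiff_null_Suc)
  moreover have "y q = z q"
    using Suc.prems(3) by (metis add_0_right zero_less_Suc)
  ultimately show ?case by (rule bdiff_eq_imp_eq)
qed

lemma bdiff_null_ex: "\<exists>y. bdiff_null m y \<and> (\<forall>v<m. y v = w v)"
proof (induction m arbitrary: w)
  case 0
  then show ?case by (simp add: bdiff_null_def)
next
  case (Suc m)
  obtain d where d: "bdiff_null m d" "\<forall>v<m. d v = bdiff w v"
    using Suc.IH by blast
  define y where "y u \<longleftrightarrow> w 0 \<noteq> prefix_parity d u" for u
  have "bdiff y = d"
    by (rule ext) (auto simp: y_def bdiff_def prefix_parity_Suc)
  moreover have "y v = w v" if "v < Suc m" for v
    using that by (induction v) (auto simp: y_def prefix_parity_Suc d(2) bdiff_def)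
  ultimately show ?case
    using d(1) by (auto simp: bdiff_null_Suc)
qed

(* Over GF(2) the difference operator is 1 + E for the shift E, and (1 + E)^(2^K) = 1 + E^(2^K). *)
lemma funpow_bdiff_2_pow: "(bdiff ^^ 2 ^ K) y j \<longleftrightarrow> y (j + 2 ^ K) \<noteq> y j"
proof (induction K arbitrary: y j)
  case 0
  then show ?case by (simp add: bdiff_def)
next
  case (Suc K)
  have "(bdiff ^^ 2 ^ Suc K) y = (bdiff ^^ 2 ^ K) ((bdiff ^^ 2 ^ K) y)"
    by (simp add: mult_2 funpow_add)
  then show ?case
    by (simp add: Suc add.assoc mult_2) auto
qed

lemma bdiff_const [simp]: "bdiff (\<lambda>_. b) = (\<lambda>_. False)"
  by (simp add: bdiff_def fun_eq_iff)

lemma bdiff_null_mono: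
  assumes "bdiff_null m y" "m \<le> l"
  shows "bdiff_null l y"
proof -
  have "bdiff_null (d + m) y" for d
    by (induction d) (use assms(1) in \<open>simp_all add: bdiff_null_def\<close>)
  then show ?thesis
    using assms(2) by (metis le_add_diff_inverse2)
qed

lemma bdiff_null_mod:
  assumes "bdiff_null m y"
  shows "y (j mod 2 ^ m) = y j"
proof -
  have "bdiff_null (2 ^ m) y"
    using assms less_exp[of m] by (blast intro: bdiff_null_mono less_imp_le)
  then have period: "y (i + 2 ^ m) = y i" for i
    using funpow_bdiff_2_pow[of m y i] by (simp add: bdiff_null_def)
  have "y (i + c * 2 ^ m) = y i" for i c :: nat
  proof (induction c)
    case (Suc c)
    then show ?case using period[of "i + c * 2 ^ m"] by (simp add: ac_simps)
  qed simp
  from this[of "j mod 2 ^ m" "j div 2 ^ m"] show ?thesis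
    unfolding mod_div_mult_eq by simp
qed

definition window_complete :: "nat \<Rightarrow> nat \<Rightarrow> nat \<Rightarrow> (nat \<Rightarrow> nat \<Rightarrow> bool) \<Rightarrow> bool" where
  "window_complete t m N Y \<longleftrightarrow>
     (\<forall>q w. \<exists>!a. a < N \<and> (\<forall>v<m. Y a ((q + v) mod t) = w v))"

lemma restrict_eq_restrict_iff: "restrict f A = restrict g A \<longleftrightarrow> (\<forall>x. x \<in> A \<longrightarrow> f x = g x)"
  by (auto simp: fun_eq_iff)

lemma bij_betw_ex1: "bij_betw f A B \<Longrightarrow> b \<in> B \<Longrightarrow> \<exists>!a. a \<in> A \<and> f a = b"
  unfolding bij_betw_def inj_on_def by blast

lemma bij_betw_window_bdiff_null:
  "bij_betw (\<lambda>y. restrict (\<lambda>v. y (q + v)) {..<m}) {y. bdiff_null m y} ({..<m} \<rightarrow>\<^sub>E UNIV)"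
proof -
  let ?Null = "{y. bdiff_null m y}"
  let ?window = "\<lambda>q y. restrict (\<lambda>v. y (q + v)) {..<m}"
  have inj: "inj_on (?window q) ?Null" for q
  proof (rule inj_onI)
    fix y z assume "y \<in> ?Null" "z \<in> ?Null" "?window q y = ?window q z"
    moreover from this(3) have "\<forall>v<m. y (q + v) = z (q + v)"
      by (simp add: restrict_eq_restrict_iff)
    ultimately show "y = z"
      by (simp add: bdiff_null_eq)
  qed
  have "bij_betw (?window 0) ?Null ({..<m} \<rightarrow>\<^sub>E UNIV)"
    unfolding bij_betw_def
  proof (intro conjI inj equalityI subsetI)
    fix w :: "nat \<Rightarrow> bool" assume w: "w \<in> {..<m} \<rightarrow>\<^sub>E UNIV"
    obtain y where y: "bdiff_null m y" "\<forall>v<m. y v = w v"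
      using bdiff_null_ex by blast
    have "?window 0 y = w"
      using w y by (auto simp: PiE_def extensional_def fun_eq_iff)
    then show "w \<in> ?window 0 ` ?Null"
      using y(1) by blast
  qed auto
  then have "finite ?Null" "card ?Null = card ({..<m} \<rightarrow>\<^sub>E (UNIV :: bool set))"
    by (simp_all add: bij_betw_finite bij_betw_same_card finite_PiE)
  moreover have "?window q ` ?Null \<subseteq> {..<m} \<rightarrow>\<^sub>E UNIV"
    by auto
  moreover have "card (?window q ` ?Null) = card ?Null"
    using inj by (rule card_image)
  ultimately have "?window q ` ?Null = {..<m} \<rightarrow>\<^sub>E UNIV"
    by (intro card_subset_eq) (simp_all add: finite_PiE)
  then show ?thesis
    using inj by (simp add: bij_betw_def)
qed

lemma window_complete_bdiff_null: "\<exists>Y. window_complete (2 ^ m) m (2 ^ m) Y"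
proof -
  let ?Null = "{y. bdiff_null m y}" and ?W = "{..<m} \<rightarrow>\<^sub>E (UNIV :: bool set)"
  let ?window = "\<lambda>q y. restrict (\<lambda>v. y (q + v)) {..<m}"
  have "card ?W = 2 ^ m"
    by (simp add: card_funcsetE)
  then have "finite ?Null" "card ?Null = 2 ^ m"
    using bij_betw_window_bdiff_null[of 0 m]
    by (simp_all add: bij_betw_finite bij_betw_same_card finite_PiE)
  then obtain Y where Y: "bij_betw Y {0..<(2::nat) ^ m} ?Null"
    using ex_bij_betw_nat_finite by metis
  have "\<exists>!a. a < 2 ^ m \<and> (\<forall>v<m. Y a ((q + v) mod 2 ^ m) = w v)" for q w
  proof -
    have bij: "bij_betw (?window q \<circ> Y) {0..<2 ^ m} ?W"
      using Y bij_betw_window_bdiff_null by (rule bij_betw_trans)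
    have match: "(?window q \<circ> Y) a = restrict w {..<m} \<longleftrightarrow> (\<forall>v<m. Y a ((q + v) mod 2 ^ m) = w v)"
      if "a < 2 ^ m" for a
    proof -
      have "bdiff_null m (Y a)"
        using bij_betwE[OF Y] that by simp
      then have "Y a ((q + v) mod 2 ^ m) = Y a (q + v)" for v
        by (rule bdiff_null_mod)
      then show ?thesis
        by (simp add: restrict_eq_restrict_iff)
    qed
    have "\<exists>!a. a \<in> {0..<2 ^ m} \<and> (?window q \<circ> Y) a = restrict w {..<m}"
      using bij by (rule bij_betw_ex1) simp
    moreover have "a \<in> {0..<2 ^ m} \<and> (?window q \<circ> Y) a = restrict w {..<m} \<longleftrightarrow>
        a < 2 ^ m \<and> (\<forall>v<m. Y a ((q + v) mod 2 ^ m) = w v)" for a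
      using match by auto
    ultimately show ?thesis
      by (simp only:)
  qed
  then show ?thesis
    unfolding window_complete_def by blast
qed

lemma eq_upto_Suc_iff_bdiff:
  "(\<forall>u<Suc n. h u = g u) \<longleftrightarrow> h 0 = g 0 \<and> (\<forall>u<n. bdiff h u = bdiff g u)"
proof
  assume "\<forall>u<Suc n. h u = g u"
  then show "h 0 = g 0 \<and> (\<forall>u<n. bdiff h u = bdiff g u)"
    by (simp add: bdiff_def)
next
  assume *: "h 0 = g 0 \<and> (\<forall>u<n. bdiff h u = bdiff g u)"
  show "\<forall>u<Suc n. h u = g u"
  proof (intro allI impI)
    fix u assume "u < Suc n"
    then show "h u = g u"
      by (induction u) (use * in \<open>auto simp: bdiff_def\<close>)
  qed
qed

lemma prefix_parity_cyclic_bdiff: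
  assumes "even (hamming_weight r c)" "u < r"
  shows "(prefix_parity c (Suc u mod r) \<noteq> prefix_parity c u) \<longleftrightarrow> c u"
proof (cases "Suc u < r")
  case True
  then show ?thesis by (cases "c u") (simp_all add: prefix_parity_Suc)
next
  case False
  then have "Suc u = r" using assms(2) by simp
  moreover have "\<not> prefix_parity c r"
    using assms(1) by (simp add: prefix_parity_def hamming_weight_def)
  ultimately show ?thesis
    by (metis mod_self prefix_parity_0 prefix_parity_Suc)
qed

definition vdiff :: "(nat \<Rightarrow> nat \<Rightarrow> bool) \<Rightarrow> nat \<Rightarrow> nat \<Rightarrow> bool" where
  "vdiff M u v \<longleftrightarrow> M (Suc u) v \<noteq> M u v"

lemma window_eq_Suc_iff:
  assumes antidiff: "\<forall>j<t. \<forall>u<r. (S (Suc u mod r) j \<noteq> S u j) \<longleftrightarrow> A u j"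
    and "p < r" "0 < t"
  shows "window_eq r t (\<lambda>u j. S u j \<noteq> y j) p q (Suc n) m M \<longleftrightarrow>
           window_eq r t A p q n m (vdiff M) \<and>
           (\<forall>v<m. y ((q + v) mod t) \<longleftrightarrow> M 0 v \<noteq> S p ((q + v) mod t))"
proof -
  have column: "(\<forall>u<Suc n. (S ((p + u) mod r) j \<noteq> y j) = M u v) \<longleftrightarrow>
      (\<forall>u<n. A ((p + u) mod r) j = vdiff M u v) \<and> (y j \<longleftrightarrow> M 0 v \<noteq> S p j)"
    if "j < t" for j v
  proof -
    have "bdiff (\<lambda>u. S ((p + u) mod r) j \<noteq> y j) u = A ((p + u) mod r) j" for u
    proof -
      have "(p + u) mod r < r"
        using \<open>p < r\<close> by simp
      then have "(S (Suc ((p + u) mod r) mod r) j \<noteq> S ((p + u) mod r) j) \<longleftrightarrow> A ((p + u) mod r) j"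
        using antidiff that by blast
      then show ?thesis
        by (auto simp: bdiff_def mod_Suc_eq)
    qed
    then show ?thesis
      unfolding eq_upto_Suc_iff_bdiff[where g = "\<lambda>u. M u v"]
      using \<open>p < r\<close> by (auto simp: bdiff_def vdiff_def)
  qed
  have "window_eq r t (\<lambda>u j. S u j \<noteq> y j) p q (Suc n) m M \<longleftrightarrow>
      (\<forall>v<m. \<forall>u<Suc n. (S ((p + u) mod r) ((q + v) mod t) \<noteq> y ((q + v) mod t)) = M u v)"
    unfolding window_eq_def by blast
  also have "\<dots> \<longleftrightarrow> (\<forall>v<m. (\<forall>u<n. A ((p + u) mod r) ((q + v) mod t) = vdiff M u v) \<and>
      (y ((q + v) mod t) \<longleftrightarrow> M 0 v \<noteq> S p ((q + v) mod t)))"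
    using column \<open>0 < t\<close> by simp
  finally show ?thesis
    unfolding window_eq_def by blast
qed

lemma ex1_triple_iff:
  "(\<exists>!w. case w of (i, p, q) \<Rightarrow> P i p q) \<longleftrightarrow>
     (\<exists>i p q. P i p q \<and> (\<forall>i' p' q'. P i' p' q' \<longrightarrow> i' = i \<and> p' = p \<and> q' = q))"
  by (auto 0 4 simp: Ex1_def split: prod.splits)

lemma ex1_mixed_radix_index:
  fixes k N :: nat
  assumes ex1: "\<exists>!w. case w of (i, p, q) \<Rightarrow> i < k \<and> P i p q"
    and ex1_digit: "\<And>i p q. i < k \<Longrightarrow> P i p q \<Longrightarrow> \<exists>!a. a < N \<and> Q i p q a"
  shows "\<exists>!w. case w of (I, p, q) \<Rightarrow> I < N * k \<and> P (I mod k) p q \<and> Q (I mod k) p q (I div k)"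
proof -
  obtain i p q where ipq: "i < k" "P i p q"
    and uniq_ipq: "\<And>i' p' q'. i' < k \<Longrightarrow> P i' p' q' \<Longrightarrow> i' = i \<and> p' = p \<and> q' = q"
    using ex1 unfolding ex1_triple_iff by meson
  obtain a where a: "a < N" "Q i p q a" and uniq_a: "\<And>b. b < N \<Longrightarrow> Q i p q b \<Longrightarrow> b = a"
    using ex1_digit[OF ipq] by blast
  have index: "I < N * k \<longleftrightarrow> I div k < N" for I
    using ipq(1) by (simp add: div_less_iff_less_mult)
  let ?I = "i + k * a"
  have I: "?I mod k = i" "?I div k = a"
    using ipq(1) by simp_all
  show ?thesis
    unfolding ex1_triple_iff
  proof (intro exI[of _ ?I] exI[of _ p] exI[of _ q] conjI allI impI)
    show "?I < N * k"
      unfolding index I using a(1) .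
    show "P (?I mod k) p q" "Q (?I mod k) p q (?I div k)"
      unfolding I using ipq(2) a(2) .
    fix I' p' q'
    assume I': "I' < N * k \<and> P (I' mod k) p' q' \<and> Q (I' mod k) p' q' (I' div k)"
    then have "I' mod k = i" "p' = p" "q' = q"
      using uniq_ipq[of "I' mod k" p' q'] ipq(1) by simp_all
    moreover have "I' div k = a"
      using uniq_a I' index calculation by simp
    ultimately show "I' = ?I" "p' = p" "q' = q"
      by (metis div_mult_mod_eq add.commute mult.commute)+
  qed
qed
lemma is_DBAC_Suc:
  assumes dbac: "is_DBAC r t n m k A" and Y: "window_complete t m N Y"
    and antidiff: "\<forall>i<k. \<forall>j<t. \<forall>u<r. (S i (Suc u mod r) j \<noteq> S i u j) \<longleftrightarrow> A i u j"
  shows "is_DBAC r t (Suc n) m (N * k) (\<lambda>I u j. S (I mod k) u j \<noteq> Y (I div k) j)"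
  unfolding is_DBAC_def
proof
  fix M
  obtain i p q where "i < k" "q < t"
    using dbac unfolding is_DBAC_def ex1_triple_iff by blast
  then have "0 < k" "0 < t"
    by simp_all
  let ?P = "\<lambda>i p q. p < r \<and> q < t \<and> window_eq r t (A i) p q n m (vdiff M)"
  let ?Q = "\<lambda>i p q a. \<forall>v<m. Y a ((q + v) mod t) \<longleftrightarrow> M 0 v \<noteq> S i p ((q + v) mod t)"
  have ex1: "\<exists>!w. case w of (I, p, q) \<Rightarrow> I < N * k \<and> ?P (I mod k) p q \<and> ?Q (I mod k) p q (I div k)"
  proof (rule ex1_mixed_radix_index)
    show "\<exists>!w. case w of (i, p, q) \<Rightarrow> i < k \<and> ?P i p q"
      using dbac unfolding is_DBAC_def by simp
    show "\<exists>!a. a < N \<and> ?Q i p q a" for i p q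
      using Y[unfolded window_complete_def, rule_format, of q "\<lambda>v. M 0 v \<noteq> S i p ((q + v) mod t)"] .
  qed
  have window: "window_eq r t (\<lambda>u j. S (I mod k) u j \<noteq> Y (I div k) j) p q (Suc n) m M \<longleftrightarrow>
      window_eq r t (A (I mod k)) p q n m (vdiff M) \<and> ?Q (I mod k) p q (I div k)"
    if "p < r" for I p q
    using antidiff \<open>0 < k\<close> by (intro window_eq_Suc_iff[OF _ that \<open>0 < t\<close>]) simp
  have conditions_iff: "(case w of (I, p, q) \<Rightarrow> I < N * k \<and> p < r \<and> q < t \<and>
      window_eq r t (\<lambda>u j. S (I mod k) u j \<noteq> Y (I div k) j) p q (Suc n) m M) \<longleftrightarrow>
    (case w of (I, p, q) \<Rightarrow> I < N * k \<and> ?P (I mod k) p q \<and> ?Q (I mod k) p q (I div k))" for w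
    using window by (cases w) auto
  show "\<exists>!w. case w of (I, p, q) \<Rightarrow> I < N * k \<and> p < r \<and> q < t \<and>
      window_eq r t (\<lambda>u j. S (I mod k) u j \<noteq> Y (I div k) j) p q (Suc n) m M"
    unfolding conditions_iff by (rule ex1)
qed

theorem theorem10:
  fixes r n m k :: nat and A :: "nat \<Rightarrow> nat \<Rightarrow> nat \<Rightarrow> bool"
  assumes "0 < r" "0 < n" "0 < m" "0 < k"
    and "is_DBAC r (2 ^ m) n m k A"
    and "\<forall>i<k. \<forall>j<2 ^ m. least_period_is r (\<lambda>u. A i u j) r
                        \<and> even (hamming_weight r (\<lambda>u. A i u j))"
  shows "\<exists>B :: nat \<Rightarrow> nat \<Rightarrow> nat \<Rightarrow> bool. is_DBAC r (2 ^ m) (Suc n) m (2 ^ m * k) B"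
proof -
  obtain Y where Y: "window_complete (2 ^ m) m (2 ^ m) Y"
    using window_complete_bdiff_null by blast
  define S where "S i u j \<longleftrightarrow> prefix_parity (\<lambda>u. A i u j) u" for i u j
  have "(S i (Suc u mod r) j \<noteq> S i u j) \<longleftrightarrow> A i u j" if "i < k" "j < 2 ^ m" "u < r" for i j u
    using prefix_parity_cyclic_bdiff[of r "\<lambda>u. A i u j" u] assms(6) that by (simp add: S_def)
  then show ?thesis
    using is_DBAC_Suc[OF assms(5) Y, of S] by blast
qed

end
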